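(* Suppose that all state functions and controls are continuously differentiable on $I$. As long as $\epsilon(t)\neq 0$, $n^j(t)\neq 0$ and $V^j(t)\neq 0$ for all $j\in\{1,\dots,S\}$ and all $t\in I$, system (A) is equivalent to the "basic system" obtained from (A) by replacing the component mole balances (CM$_0$) by the original component mole balances (OCM) (for all $i=1,\dots,C$) and replacing the total mole balances (TM) by the vapor summation equations (YS). That is, a tuple of state functions satisfying these non-vanishing conditions on $I$ solves (A) if and only if it solves the basic system.
   Context: Fix integers $S\ge 2$ (stages) and $C\ge 2$ (components) and an interval $I\subset\mathbb R$. Given are continuously differentiable real functions $f_{\mathrm{vle},i}(P,T,\mathbf x)$ ($i=1,\dots,C$), $f_{\mathrm{hl}}(T,\mathbf x)$, $f_{\mathrm{hv}}(T,\mathbf y)$, $f_{\mathrm{holdup}}(L)$, with $P,T,L\in\mathbb R$, $\mathbf x,\mathbf y\in\mathbb R^C$. Controls are continuously differentiable real functions $\epsilon,P,Q,T^{\mathrm{cond}}$ on $I$. State variables are real functions on $I$: $n^j,H^j,T^j,V^j$ and vectors $\mathbf x^j=(x^j_1,\dots,x^j_C)$, $\mathbf y^j=(y^j_1,\dots,y^j_C)$ for $j=1,\dots,S$, and $L^j$ for $j=1,\dots,S-1$. A solution of a system is a tuple of continuously differentiable state functions satisfying all its equations at every $t\in I$; dots are time derivatives. Two systems are equivalent as long as a condition holds if their sets of solutions satisfying that condition on $I$ coincide. Below, "$2\le j\le S-1$" marks the middle-stage equations. (TM): $\dot n^1=L^1-V^1$; $\dot n^j=L^j-V^j-L^{j-1}+V^{j-1}$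 ($2\le j\le S-1$); $\dot n^S=-\epsilon V^S-L^{S-1}+V^{S-1}$. (CM$_0$), for $i=1,\dots,C$: $\dot x_i^1=\big(L^1(x_i^2-x_i^1)-V^1(y_i^1-x_i^1)\big)/n^1$; $\dot x_i^j=\big(L^j(x_i^{j+1}-x_i^j)-V^j(y_i^j-x_i^j)+V^{j-1}(y_i^{j-1}-x_i^j)\big)/n^j$ ($2\le j\le S-1$); $\dot x_i^S=\big(-\epsilon V^S(y_i^S-x_i^S)+V^{S-1}(y_i^{S-1}-x_i^S)\big)/n^S$. (EB): $\dot H^1=L^1f_{\mathrm{hl}}(T^2,\mathbf x^2)-V^1f_{\mathrm{hv}}(T^1,\mathbf y^1)+Q$; $\dot H^j=L^jf_{\mathrm{hl}}(T^{j+1},\mathbf x^{j+1})-V^jf_{\mathrm{hv}}(T^j,\mathbf y^j)-L^{j-1}f_{\mathrm{hl}}(T^j,\mathbf x^j)+V^{j-1}f_{\mathrm{hv}}(T^{j-1},\mathbf y^{j-1})$ ($2\le j\le S-1$); $\dot H^S=(1-\epsilon)V^Sf_{\mathrm{hl}}(T^{\mathrm{cond}},\mathbf y^S)-V^Sf_{\mathrm{hv}}(T^S,\mathbf y^S)-L^{S-1}f_{\mathrm{hl}}(T^S,\mathbf x^S)+V^{S-1}f_{\mathrm{hv}}(T^{S-1},\mathbf y^{S-1})$. (XS): $\sum_{i=1}^C x_i^j=1$, $j=1,\dots,S$. (YD): $y_i^j=f_{\mathrm{vle},i}(P,T^j,\mathbf x^j)$ for all $i,j$. (ED): $H^j=n^jf_{\mathrm{hl}}(T^j,\mathbf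 x^j)$, $j=1,\dots,S$. (HO): $n^j=f_{\mathrm{holdup}}(L^{j-1})$, $j=2,\dots,S$. System (A) consists of (TM), (CM$_0$), (EB), (XS), (YD), (ED), (HO). (YS): $\sum_{i=1}^C y_i^j=1$, $j=1,\dots,S$. (OCM), for $i=1,\dots,C$: $\frac{d}{dt}(n^1x_i^1)=L^1x_i^2-V^1y_i^1$; $\frac{d}{dt}(n^jx_i^j)=L^jx_i^{j+1}-V^jy_i^j-L^{j-1}x_i^j+V^{j-1}y_i^{j-1}$ ($2\le j\le S-1$); $\frac{d}{dt}(n^Sx_i^S)=-\epsilon V^Sy_i^S-L^{S-1}x_i^S+V^{S-1}y_i^{S-1}$. *)

theory Defs
  imports "HOL-Analysis.Analysis"
begin

abbreviation Dt :: "real set \<Rightarrow> (real \<Rightarrow> 'a::real_normed_vector) \<Rightarrow> real \<Rightarrow> 'a" where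
  "Dt I f t \<equiv> vector_derivative f (at t within I)"

definition C1_on :: "real set \<Rightarrow> (real \<Rightarrow> 'a::real_normed_vector) \<Rightarrow> bool" where
  "C1_on I f \<longleftrightarrow> (\<exists>f'. (\<forall>t\<in>I. (f has_vector_derivative f' t) (at t within I)) \<and> continuous_on I f')"

definition C1_map :: "('a::real_normed_vector \<Rightarrow> 'b::real_normed_vector) \<Rightarrow> bool" where
  "C1_map f \<longleftrightarrow> (\<exists>f'. (\<forall>z. (f has_derivative blinfun_apply (f' z)) (at z)) \<and> continuous_on UNIV f')"

text \<open>States: n, H, T, V, L :: stage => time => real; x, y :: stage => time => real^'c
  (component index type 'c, C = CARD('c)). Controls eps, P, Q, Tc :: time => real.\<close>

definition TM :: "real set \<Rightarrow> nat \<Rightarrow> (real \<Rightarrow> real) \<Rightarrow> (nat \<Rightarrow> real \<Rightarrow> real) \<Rightarrow>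
    (nat \<Rightarrow> real \<Rightarrow> real) \<Rightarrow> (nat \<Rightarrow> real \<Rightarrow> real) \<Rightarrow> bool" where
  "TM I S eps n L V \<longleftrightarrow> (\<forall>t\<in>I.
     Dt I (n 1) t = L 1 t - V 1 t \<and>
     (\<forall>j\<in>{2..S-1}. Dt I (n j) t = L j t - V j t - L (j-1) t + V (j-1) t) \<and>
     Dt I (n S) t = - eps t * V S t - L (S-1) t + V (S-1) t)"

definition CM0 :: "real set \<Rightarrow> nat \<Rightarrow> (real \<Rightarrow> real) \<Rightarrow> (nat \<Rightarrow> real \<Rightarrow> real) \<Rightarrow>
    (nat \<Rightarrow> real \<Rightarrow> real) \<Rightarrow> (nat \<Rightarrow> real \<Rightarrow> real) \<Rightarrow>
    (nat \<Rightarrow> real \<Rightarrow> real^'c) \<Rightarrow> (nat \<Rightarrow> real \<Rightarrow> real^'c) \<Rightarrow> bool" where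
  "CM0 I S eps n L V x y \<longleftrightarrow> (\<forall>t\<in>I. \<forall>i.
     Dt I (\<lambda>s. x 1 s $ i) t =
       (L 1 t * (x 2 t $ i - x 1 t $ i) - V 1 t * (y 1 t $ i - x 1 t $ i)) / n 1 t \<and>
     (\<forall>j\<in>{2..S-1}. Dt I (\<lambda>s. x j s $ i) t =
       (L j t * (x (j+1) t $ i - x j t $ i) - V j t * (y j t $ i - x j t $ i)
        + V (j-1) t * (y (j-1) t $ i - x j t $ i)) / n j t) \<and>
     Dt I (\<lambda>s. x S s $ i) t =
       (- eps t * V S t * (y S t $ i - x S t $ i)
        + V (S-1) t * (y (S-1) t $ i - x S t $ i)) / n S t)"

definition EB :: "real set \<Rightarrow> nat \<Rightarrow> (real \<Rightarrow> real^'c \<Rightarrow> real) \<Rightarrow> (real \<Rightarrow> real^'c \<Rightarrow> real) \<Rightarrow>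
    (real \<Rightarrow> real) \<Rightarrow> (real \<Rightarrow> real) \<Rightarrow> (real \<Rightarrow> real) \<Rightarrow>
    (nat \<Rightarrow> real \<Rightarrow> real) \<Rightarrow> (nat \<Rightarrow> real \<Rightarrow> real) \<Rightarrow> (nat \<Rightarrow> real \<Rightarrow> real) \<Rightarrow> (nat \<Rightarrow> real \<Rightarrow> real) \<Rightarrow>
    (nat \<Rightarrow> real \<Rightarrow> real^'c) \<Rightarrow> (nat \<Rightarrow> real \<Rightarrow> real^'c) \<Rightarrow> bool" where
  "EB I S fhl fhv eps Q Tc H T L V x y \<longleftrightarrow> (\<forall>t\<in>I.
     Dt I (H 1) t = L 1 t * fhl (T 2 t) (x 2 t) - V 1 t * fhv (T 1 t) (y 1 t) + Q t \<and>
     (\<forall>j\<in>{2..S-1}. Dt I (H j) t =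
        L j t * fhl (T (j+1) t) (x (j+1) t) - V j t * fhv (T j t) (y j t)
        - L (j-1) t * fhl (T j t) (x j t) + V (j-1) t * fhv (T (j-1) t) (y (j-1) t)) \<and>
     Dt I (H S) t = (1 - eps t) * V S t * fhl (Tc t) (y S t) - V S t * fhv (T S t) (y S t)
        - L (S-1) t * fhl (T S t) (x S t) + V (S-1) t * fhv (T (S-1) t) (y (S-1) t))"

definition XS :: "real set \<Rightarrow> nat \<Rightarrow> (nat \<Rightarrow> real \<Rightarrow> real^'c) \<Rightarrow> bool" where
  "XS I S x \<longleftrightarrow> (\<forall>t\<in>I. \<forall>j\<in>{1..S}. (\<Sum>i\<in>UNIV. x j t $ i) = 1)"

definition YS :: "real set \<Rightarrow> nat \<Rightarrow> (nat \<Rightarrow> real \<Rightarrow> real^'c) \<Rightarrow> bool" where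
  "YS I S y \<longleftrightarrow> (\<forall>t\<in>I. \<forall>j\<in>{1..S}. (\<Sum>i\<in>UNIV. y j t $ i) = 1)"

definition YD :: "real set \<Rightarrow> nat \<Rightarrow> ('c \<Rightarrow> real \<Rightarrow> real \<Rightarrow> real^'c \<Rightarrow> real) \<Rightarrow> (real \<Rightarrow> real) \<Rightarrow>
    (nat \<Rightarrow> real \<Rightarrow> real) \<Rightarrow> (nat \<Rightarrow> real \<Rightarrow> real^'c) \<Rightarrow> (nat \<Rightarrow> real \<Rightarrow> real^'c) \<Rightarrow> bool" where
  "YD I S fvle P T x y \<longleftrightarrow> (\<forall>t\<in>I. \<forall>j\<in>{1..S}. \<forall>i. y j t $ i = fvle i (P t) (T j t) (x j t))"

definition ED :: "real set \<Rightarrow> nat \<Rightarrow> (real \<Rightarrow> real^'c \<Rightarrow> real) \<Rightarrow>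
    (nat \<Rightarrow> real \<Rightarrow> real) \<Rightarrow> (nat \<Rightarrow> real \<Rightarrow> real) \<Rightarrow> (nat \<Rightarrow> real \<Rightarrow> real) \<Rightarrow>
    (nat \<Rightarrow> real \<Rightarrow> real^'c) \<Rightarrow> bool" where
  "ED I S fhl n H T x \<longleftrightarrow> (\<forall>t\<in>I. \<forall>j\<in>{1..S}. H j t = n j t * fhl (T j t) (x j t))"

definition HO :: "real set \<Rightarrow> nat \<Rightarrow> (real \<Rightarrow> real) \<Rightarrow> (nat \<Rightarrow> real \<Rightarrow> real) \<Rightarrow>
    (nat \<Rightarrow> real \<Rightarrow> real) \<Rightarrow> bool" where
  "HO I S fholdup n L \<longleftrightarrow> (\<forall>t\<in>I. \<forall>j\<in>{2..S}. n j t = fholdup (L (j-1) t))"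

definition OCM :: "real set \<Rightarrow> nat \<Rightarrow> (real \<Rightarrow> real) \<Rightarrow> (nat \<Rightarrow> real \<Rightarrow> real) \<Rightarrow>
    (nat \<Rightarrow> real \<Rightarrow> real) \<Rightarrow> (nat \<Rightarrow> real \<Rightarrow> real) \<Rightarrow>
    (nat \<Rightarrow> real \<Rightarrow> real^'c) \<Rightarrow> (nat \<Rightarrow> real \<Rightarrow> real^'c) \<Rightarrow> bool" where
  "OCM I S eps n L V x y \<longleftrightarrow> (\<forall>t\<in>I. \<forall>i.
     Dt I (\<lambda>s. n 1 s * x 1 s $ i) t = L 1 t * x 2 t $ i - V 1 t * y 1 t $ i \<and>
     (\<forall>j\<in>{2..S-1}. Dt I (\<lambda>s. n j s * x j s $ i) t =
        L j t * x (j+1) t $ i - V j t * y j t $ i - L (j-1) t * x j t $ i + V (j-1) t * y (j-1) t $ i) \<and>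
     Dt I (\<lambda>s. n S s * x S s $ i) t =
        - eps t * V S t * y S t $ i - L (S-1) t * x S t $ i + V (S-1) t * y (S-1) t $ i)"

definition sysA where
  "sysA I S fvle fhl fhv fholdup eps P Q Tc n H T V L x y \<longleftrightarrow>
     TM I S eps n L V \<and> CM0 I S eps n L V x y \<and> EB I S fhl fhv eps Q Tc H T L V x y \<and>
     XS I S x \<and> YD I S fvle P T x y \<and> ED I S fhl n H T x \<and> HO I S fholdup n L"

definition sysBasic where
  "sysBasic I S fvle fhl fhv fholdup eps P Q Tc n H T V L x y \<longleftrightarrow>
     YS I S y \<and> OCM I S eps n L V x y \<and> EB I S fhl fhv eps Q Tc H T L V x y \<and>
     XS I S x \<and> YD I S fvle P T x y \<and> ED I S fhl n H T x \<and> HO I S fholdup n L"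

end

theory Submission
  imports Defs
begin

text \<open>On a solution of (XS) the mole fractions of a stage have derivatives summing to zero, and
  the product rule gives \<open>(n x\<^sub>i)' = n' x\<^sub>i + n x\<^sub>i'\<close>. Hence, given (TM), the balances (CM0)
  and (OCM) are equivalent stage by stage. Summing (CM0) of stage \<open>j\<close> over the components
  leaves \<open>V\<^sup>j (\<Sum>y\<^sup>j - 1) = V\<^sup>j\<^sup>-\<^sup>1 (\<Sum>y\<^sup>j\<^sup>-\<^sup>1 - 1)\<close> (with \<open>\<epsilon> V\<^sup>S\<close> at the top and no right-hand side at
  the bottom), so (YS) follows by induction on \<open>j\<close> because \<open>V\<^sup>j\<close> and \<open>\<epsilon>\<close> never vanish.
  Conversely, summing (OCM) over the components under (XS) and (YS) returns (TM).\<close>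

lemma at_within_interval_nontrivial:
  fixes I :: "real set"
  assumes "is_interval I" and "\<exists>a\<in>I. \<exists>b\<in>I. a < b" and "t \<in> I"
  shows "at t within I \<noteq> bot"
proof -
  have "t islimpt I"
    using assms by (intro connected_imp_perfect is_interval_connected) auto
  then show ?thesis
    by (simp add: trivial_limit_within)
qed

lemma C1_on_has_vector_derivative:
  assumes "C1_on I f" and "t \<in> I" and "at t within I \<noteq> bot"
  shows "(f has_vector_derivative Dt I f t) (at t within I)"
proof -
  obtain f' where "\<forall>t\<in>I. (f has_vector_derivative f' t) (at t within I)"
    using assms(1) unfolding C1_on_def by blast
  with assms(2) have f': "(f has_vector_derivative f' t) (at t within I)" by blast
  with vector_derivative_within[OF assms(3) f'] show ?thesis by simp
qed

lemma C1_on_vec_nth: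
  fixes f :: "real \<Rightarrow> 'a::real_normed_vector ^ 'n"
  assumes "C1_on I f"
  shows "C1_on I (\<lambda>s. f s $ i)"
proof -
  obtain f' where "\<forall>t\<in>I. (f has_vector_derivative f' t) (at t within I)" "continuous_on I f'"
    using assms unfolding C1_on_def by blast
  then have "\<forall>t\<in>I. ((\<lambda>s. f s $ i) has_vector_derivative f' t $ i) (at t within I)"
    and "continuous_on I (\<lambda>t. f' t $ i)"
    by (auto intro: bounded_linear.has_vector_derivative[OF bounded_linear_vec_nth]
             continuous_on_component)
  then show ?thesis
    unfolding C1_on_def by (intro exI[of _ "\<lambda>t. f' t $ i"] conjI)
qed

lemma Dt_mult:
  fixes f g :: "real \<Rightarrow> real"
  assumes "C1_on I f" and "C1_on I g" and "t \<in> I" and "at t within I \<noteq> bot"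
  shows "Dt I (\<lambda>s. f s * g s) t = Dt I f t * g t + f t * Dt I g t"
proof -
  have "((\<lambda>s. f s * g s) has_vector_derivative f t * Dt I g t + Dt I f t * g t) (at t within I)"
    using assms by (intro has_vector_derivative_mult C1_on_has_vector_derivative)
  from vector_derivative_within[OF assms(4) this] show ?thesis
    by simp
qed

lemma sum_Dt_eq_0_if_sum_const:
  fixes f :: "'i \<Rightarrow> real \<Rightarrow> real"
  assumes "finite A" and "\<forall>i\<in>A. C1_on I (f i)" and "\<forall>s\<in>I. (\<Sum>i\<in>A. f i s) = c"
    and "t \<in> I" and "at t within I \<noteq> bot"
  shows "(\<Sum>i\<in>A. Dt I (f i) t) = 0"
proof -
  have sum: "((\<lambda>s. \<Sum>i\<in>A. f i s) has_vector_derivative (\<Sum>i\<in>A. Dt I (f i) t)) (at t within I)"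
    using assms by (intro has_vector_derivative_sum C1_on_has_vector_derivative) auto
  have "((\<lambda>s. c) has_vector_derivative (\<Sum>i\<in>A. Dt I (f i) t)) (at t within I)"
    using assms(3) by (intro has_vector_derivative_transform[OF assms(4) _ sum]) auto
  then show ?thesis
    using has_vector_derivative_const by (rule vector_derivative_unique_within[OF assms(5)])
qed

text \<open>Stage \<open>j\<close> receives liquid of composition \<open>x\<^sup>j\<^sup>+\<^sup>1\<close> and vapour of composition \<open>y\<^sup>j\<^sup>-\<^sup>1\<close>, and
  releases vapour of composition \<open>y\<^sup>j\<close> and liquid of composition \<open>x\<^sup>j\<close>. With the streams absent at
  stages \<open>1\<close> and \<open>S\<close> set to \<open>0\<close>, (TM), (CM0) and (OCM) take one form for all stages; at stage \<open>S\<close>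
  only the fraction \<open>\<epsilon>\<close> of the vapour is withdrawn.\<close>

definition liquid_inflow :: "nat \<Rightarrow> (nat \<Rightarrow> real \<Rightarrow> real) \<Rightarrow> nat \<Rightarrow> real \<Rightarrow> real" where
  "liquid_inflow S L j t = (if j = S then 0 else L j t)"

definition vapour_outflow ::
    "nat \<Rightarrow> (real \<Rightarrow> real) \<Rightarrow> (nat \<Rightarrow> real \<Rightarrow> real) \<Rightarrow> nat \<Rightarrow> real \<Rightarrow> real" where
  "vapour_outflow S eps V j t = (if j = S then eps t * V S t else V j t)"

definition liquid_outflow :: "(nat \<Rightarrow> real \<Rightarrow> real) \<Rightarrow> nat \<Rightarrow> real \<Rightarrow> real" where
  "liquid_outflow L j t = (if j = 1 then 0 else L (j - 1) t)"

definition vapour_inflow :: "(nat \<Rightarrow> real \<Rightarrow> real) \<Rightarrow> nat \<Rightarrow> real \<Rightarrow> real" where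
  "vapour_inflow V j t = (if j = 1 then 0 else V (j - 1) t)"

lemmas stage_flow_defs = liquid_inflow_def vapour_outflow_def liquid_outflow_def vapour_inflow_def

lemma ball_stages_split:
  fixes S :: nat
  assumes "2 \<le> S"
  shows "(\<forall>j\<in>{1..S}. P j) \<longleftrightarrow> P 1 \<and> (\<forall>j\<in>{2..S-1}. P j) \<and> P S"
proof -
  have "{1..S} = insert 1 (insert S {2..S-1})"
    using assms by auto
  then show ?thesis
    by auto
qed

lemma TM_stagewise:
  assumes "2 \<le> S"
  shows "TM I S eps n L V \<longleftrightarrow> (\<forall>t\<in>I. \<forall>j\<in>{1..S}. Dt I (n j) t =
    liquid_inflow S L j t - vapour_outflow S eps V j t - liquid_outflow L j t + vapour_inflow V j t)"
  unfolding TM_def ball_stages_split[OF assms]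
  using assms by (auto simp: stage_flow_defs simp del: One_nat_def)

lemma CM0_stagewise:
  assumes "2 \<le> S"
  shows "CM0 I S eps n L V x y \<longleftrightarrow> (\<forall>t\<in>I. \<forall>j\<in>{1..S}. \<forall>i. Dt I (\<lambda>s. x j s $ i) t =
    (liquid_inflow S L j t * (x (j+1) t $ i - x j t $ i)
     - vapour_outflow S eps V j t * (y j t $ i - x j t $ i)
     + vapour_inflow V j t * (y (j-1) t $ i - x j t $ i)) / n j t)"
  unfolding CM0_def ball_stages_split[OF assms]
  using assms by (auto simp: stage_flow_defs simp del: One_nat_def)

lemma OCM_stagewise:
  assumes "2 \<le> S"
  shows "OCM I S eps n L V x y \<longleftrightarrow> (\<forall>t\<in>I. \<forall>j\<in>{1..S}. \<forall>i. Dt I (\<lambda>s. n j s * x j s $ i) t =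
    liquid_inflow S L j t * x (j+1) t $ i - vapour_outflow S eps V j t * y j t $ i
    - liquid_outflow L j t * x j t $ i + vapour_inflow V j t * y (j-1) t $ i)"
  unfolding OCM_def ball_stages_split[OF assms]
  using assms by (auto simp: stage_flow_defs simp del: One_nat_def)

lemma liquid_inflow_mult_feed_sum:
  assumes "XS I S x" and "t \<in> I" and "j \<in> {1..S}"
  shows "liquid_inflow S L j t * (\<Sum>i\<in>UNIV. x (j+1) t $ i) = liquid_inflow S L j t"
  using assms by (auto simp: XS_def liquid_inflow_def)

lemma vapour_inflow_mult_feed_sum:
  assumes "YS I S y" and "t \<in> I" and "j \<in> {1..S}"
  shows "vapour_inflow V j t * (\<Sum>i\<in>UNIV. y (j-1) t $ i) = vapour_inflow V j t"
proof (cases "j = 1")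
  case False
  with assms(3) have "j - 1 \<in> {1..S}" by auto
  with assms(1,2) show ?thesis by (simp add: YS_def)
qed (simp add: vapour_inflow_def)

lemma fraction_balance_iff_component_balance:
  fixes n dn dx dnx a b c d xin x y yin :: real
  assumes "n \<noteq> 0" and "dnx = dn * x + n * dx" and "dn = a - b - c + d"
  shows "dx = (a * (xin - x) - b * (y - x) + d * (yin - x)) / n \<longleftrightarrow>
         dnx = a * xin - b * y - c * x + d * yin"
  using assms by (auto simp: field_simps)

lemma sum_fraction_balance:
  fixes xin x y yin dx :: "'i \<Rightarrow> real"
  assumes "n \<noteq> 0" and "\<forall>i\<in>A. dx i = (a * (xin i - x i) - b * (y i - x i) + d * (yin i - x i)) / n"
  shows "n * sum dx A =
    a * (sum xin A - sum x A) - b * (sum y A - sum x A) + d * (sum yin A - sum x A)"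
proof -
  have "n * sum dx A = (\<Sum>i\<in>A. a * (xin i - x i) - b * (y i - x i) + d * (yin i - x i))"
    using assms by (simp add: sum_distrib_left)
  also have "\<dots> = a * (sum xin A - sum x A) - b * (sum y A - sum x A) + d * (sum yin A - sum x A)"
    by (simp add: sum.distrib sum_subtractf right_diff_distrib sum_distrib_left)
  finally show ?thesis .
qed

lemma CM0_iff_OCM:
  fixes x y :: "nat \<Rightarrow> real \<Rightarrow> real ^ 'c"
  assumes "2 \<le> S" and "TM I S eps n L V" and "\<forall>t\<in>I. \<forall>j\<in>{1..S}. n j t \<noteq> 0"
    and "\<forall>t\<in>I. \<forall>j\<in>{1..S}. \<forall>i. Dt I (\<lambda>s. n j s * x j s $ i) t =
           Dt I (n j) t * x j t $ i + n j t * Dt I (\<lambda>s. x j s $ i) t"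
  shows "CM0 I S eps n L V x y \<longleftrightarrow> OCM I S eps n L V x y"
proof -
  have "Dt I (\<lambda>s. x j s $ i) t =
          (liquid_inflow S L j t * (x (j+1) t $ i - x j t $ i)
           - vapour_outflow S eps V j t * (y j t $ i - x j t $ i)
           + vapour_inflow V j t * (y (j-1) t $ i - x j t $ i)) / n j t \<longleftrightarrow>
        Dt I (\<lambda>s. n j s * x j s $ i) t =
          liquid_inflow S L j t * x (j+1) t $ i - vapour_outflow S eps V j t * y j t $ i
          - liquid_outflow L j t * x j t $ i + vapour_inflow V j t * y (j-1) t $ i"
    if "t \<in> I" and "j \<in> {1..S}" for t j i
    using assms(2-4) that unfolding TM_stagewise[OF assms(1)]
    by (intro fraction_balance_iff_component_balance) auto
  then show ?thesis
    unfolding CM0_stagewise[OF assms(1)] OCM_stagewise[OF assms(1)] by simp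
qed

lemma CM0_imp_YS:
  fixes x y :: "nat \<Rightarrow> real \<Rightarrow> real ^ 'c::finite"
  assumes "2 \<le> S" and "CM0 I S eps n L V x y" and "XS I S x"
    and "\<forall>t\<in>I. eps t \<noteq> 0" and "\<forall>t\<in>I. \<forall>j\<in>{1..S}. n j t \<noteq> 0 \<and> V j t \<noteq> 0"
    and "\<forall>t\<in>I. \<forall>j\<in>{1..S}. (\<Sum>i\<in>UNIV. Dt I (\<lambda>s. x j s $ i) t) = 0"
  shows "YS I S y"
  unfolding YS_def
proof (intro ballI)
  fix t j assume t: "t \<in> I" and j: "j \<in> {1..S}"
  define excess where "excess k = (\<Sum>i\<in>UNIV. y k t $ i) - 1" for k
  have balance: "vapour_outflow S eps V k t * excess k = vapour_inflow V k t * excess (k - 1)"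
    if k: "k \<in> {1..S}" for k
  proof -
    have "n k t * (\<Sum>i\<in>UNIV. Dt I (\<lambda>s. x k s $ i) t) =
        liquid_inflow S L k t * ((\<Sum>i\<in>UNIV. x (k+1) t $ i) - (\<Sum>i\<in>UNIV. x k t $ i))
        - vapour_outflow S eps V k t * ((\<Sum>i\<in>UNIV. y k t $ i) - (\<Sum>i\<in>UNIV. x k t $ i))
        + vapour_inflow V k t * ((\<Sum>i\<in>UNIV. y (k-1) t $ i) - (\<Sum>i\<in>UNIV. x k t $ i))"
      using assms(2,5) t k unfolding CM0_stagewise[OF assms(1)]
      by (intro sum_fraction_balance) auto
    moreover have "(\<Sum>i\<in>UNIV. Dt I (\<lambda>s. x k s $ i) t) = 0"
      using assms(6) t k by blast
    moreover have "(\<Sum>i\<in>UNIV. x k t $ i) = 1"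
      using assms(3) t k by (simp add: XS_def)
    ultimately have "0 = liquid_inflow S L k t * ((\<Sum>i\<in>UNIV. x (k+1) t $ i) - 1)
        - vapour_outflow S eps V k t * excess k + vapour_inflow V k t * excess (k - 1)"
      unfolding excess_def by simp
    moreover have "liquid_inflow S L k t * ((\<Sum>i\<in>UNIV. x (k+1) t $ i) - 1) = 0"
      using liquid_inflow_mult_feed_sum[OF assms(3) t k] by (simp add: right_diff_distrib)
    ultimately show ?thesis
      by linarith
  qed
  have "excess k = 0" if "k \<in> {1..S}" for k
    using that
  proof (induction k)
    case (Suc k)
    have "vapour_inflow V (Suc k) t * excess k = 0"
      using Suc by (cases "k = 0") (auto simp: vapour_inflow_def)
    moreover have "vapour_outflow S eps V (Suc k) t \<noteq> 0"
      using assms(4,5) t Suc.prems by (auto simp: vapour_outflow_def)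
    ultimately show ?case
      using balance[OF Suc.prems] by (metis diff_Suc_1 mult_eq_0_iff)
  qed simp
  from this[OF j] show "(\<Sum>i\<in>UNIV. y j t $ i) = 1"
    by (simp add: excess_def)
qed

lemma OCM_imp_TM:
  fixes x y :: "nat \<Rightarrow> real \<Rightarrow> real ^ 'c::finite"
  assumes "2 \<le> S" and "OCM I S eps n L V x y" and "XS I S x" and "YS I S y"
    and "\<forall>t\<in>I. \<forall>j\<in>{1..S}. \<forall>i. Dt I (\<lambda>s. n j s * x j s $ i) t =
           Dt I (n j) t * x j t $ i + n j t * Dt I (\<lambda>s. x j s $ i) t"
    and "\<forall>t\<in>I. \<forall>j\<in>{1..S}. (\<Sum>i\<in>UNIV. Dt I (\<lambda>s. x j s $ i) t) = 0"
  shows "TM I S eps n L V"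
  unfolding TM_stagewise[OF assms(1)]
proof (intro ballI)
  fix t j assume t: "t \<in> I" and j: "j \<in> {1..S}"
  have x_sum: "(\<Sum>i\<in>UNIV. x j t $ i) = 1" and y_sum: "(\<Sum>i\<in>UNIV. y j t $ i) = 1"
    using assms(3,4) t j by (simp_all add: XS_def YS_def)
  have "Dt I (n j) t = (\<Sum>i\<in>UNIV. Dt I (\<lambda>s. n j s * x j s $ i) t)"
    using assms(5,6) t j x_sum by (simp add: sum.distrib flip: sum_distrib_left)
  also have "\<dots> = liquid_inflow S L j t * (\<Sum>i\<in>UNIV. x (j+1) t $ i)
      - vapour_outflow S eps V j t * (\<Sum>i\<in>UNIV. y j t $ i)
      - liquid_outflow L j t * (\<Sum>i\<in>UNIV. x j t $ i)
      + vapour_inflow V j t * (\<Sum>i\<in>UNIV. y (j-1) t $ i)"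
    using assms(2) t j unfolding OCM_stagewise[OF assms(1)]
    by (simp add: sum.distrib sum_subtractf sum_distrib_left)
  also have "\<dots> =
      liquid_inflow S L j t - vapour_outflow S eps V j t - liquid_outflow L j t + vapour_inflow V j t"
    by (simp only: liquid_inflow_mult_feed_sum[OF assms(3) t j]
        vapour_inflow_mult_feed_sum[OF assms(4) t j] x_sum y_sum mult_1_right)
  finally show "Dt I (n j) t =
      liquid_inflow S L j t - vapour_outflow S eps V j t - liquid_outflow L j t + vapour_inflow V j t" .
qed

theorem mainTheorem1:
  fixes S :: nat and I :: "real set"
    and fvle :: "'c::finite \<Rightarrow> real \<Rightarrow> real \<Rightarrow> real^'c \<Rightarrow> real"
    and fhl fhv :: "real \<Rightarrow> real^'c \<Rightarrow> real" and fholdup :: "real \<Rightarrow> real"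
    and eps P Q Tc :: "real \<Rightarrow> real"
    and n H T V L :: "nat \<Rightarrow> real \<Rightarrow> real"
    and x y :: "nat \<Rightarrow> real \<Rightarrow> real^'c"
  assumes "S \<ge> 2" and "CARD('c) \<ge> 2"
    and "is_interval I" and "\<exists>a\<in>I. \<exists>b\<in>I. a < b"
    and "\<forall>i. C1_map (\<lambda>(p, temp, z). fvle i p temp z)"
    and "C1_map (\<lambda>(temp, z). fhl temp z)" and "C1_map (\<lambda>(temp, z). fhv temp z)"
    and "C1_map fholdup"
    and "C1_on I eps" and "C1_on I P" and "C1_on I Q" and "C1_on I Tc"
    and "\<forall>j\<in>{1..S}. C1_on I (n j) \<and> C1_on I (H j) \<and> C1_on I (T j) \<and> C1_on I (V j)
                     \<and> C1_on I (x j) \<and> C1_on I (y j)"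
    and "\<forall>j\<in>{1..S-1}. C1_on I (L j)"
    and "\<forall>t\<in>I. eps t \<noteq> 0"
    and "\<forall>t\<in>I. \<forall>j\<in>{1..S}. n j t \<noteq> 0 \<and> V j t \<noteq> 0"
  shows "sysA I S fvle fhl fhv fholdup eps P Q Tc n H T V L x y \<longleftrightarrow>
         sysBasic I S fvle fhl fhv fholdup eps P Q Tc n H T V L x y"
proof -
  note nonzero = assms(15,16)
  have nontrivial: "at t within I \<noteq> bot" if "t \<in> I" for t
    using assms(3,4) that by (rule at_within_interval_nontrivial)
  have C1: "C1_on I (n j)" "C1_on I (\<lambda>s. x j s $ i)" if "j \<in> {1..S}" for j i
    using assms(13) that C1_on_vec_nth by blast+
  have product_rule: "\<forall>t\<in>I. \<forall>j\<in>{1..S}. \<forall>i. Dt I (\<lambda>s. n j s * x j s $ i) t =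
      Dt I (n j) t * x j t $ i + n j t * Dt I (\<lambda>s. x j s $ i) t"
    by (auto intro!: Dt_mult C1 nontrivial)
  have fraction_derivatives_sum: "\<forall>t\<in>I. \<forall>j\<in>{1..S}. (\<Sum>i\<in>UNIV. Dt I (\<lambda>s. x j s $ i) t) = 0"
    if "XS I S x"
    using that unfolding XS_def by (auto intro!: sum_Dt_eq_0_if_sum_const C1 nontrivial)
  show ?thesis
  proof
    assume A: "sysA I S fvle fhl fhv fholdup eps P Q Tc n H T V L x y"
    then have "YS I S y"
      using CM0_imp_YS assms(1) nonzero fraction_derivatives_sum unfolding sysA_def by blast
    moreover have "OCM I S eps n L V x y"
      using A CM0_iff_OCM assms(1) nonzero product_rule unfolding sysA_def by blast
    ultimately show "sysBasic I S fvle fhl fhv fholdup eps P Q Tc n H T V L x y"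
      using A unfolding sysA_def sysBasic_def by blast
  next
    assume B: "sysBasic I S fvle fhl fhv fholdup eps P Q Tc n H T V L x y"
    then have TM: "TM I S eps n L V"
      using OCM_imp_TM assms(1) product_rule fraction_derivatives_sum unfolding sysBasic_def by blast
    moreover have "CM0 I S eps n L V x y"
      using B TM CM0_iff_OCM assms(1) nonzero product_rule unfolding sysBasic_def by blast
    ultimately show "sysA I S fvle fhl fhv fholdup eps P Q Tc n H T V L x y"
      using B unfolding sysA_def sysBasic_def by blast
  qed
qed

end
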